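(* Let $(\mu^{(n)})$ be an almost-Berger sequence with regularity index $\mathrm{reg}(\mu^{(n)})\ge2$. Then for every integer $k\ge1$ there exists a constant $L_k>0$ such that $$|\mathrm{Rm}^k(\mu^{(n)})|_{\rm st}\le L_k\Big((\varepsilon^{(n)})^{1/2}+(\varepsilon^{(n)})^{-\frac{k+2}{2}}|\lambda_1^{(n)}-\lambda_2^{(n)}|\Big)\quad\text{for all }n\in\mathbb N.$$
   Context: Let $X_0=\begin{pmatrix}i&0\\0&-i\end{pmatrix}$, $X_1=\begin{pmatrix}0&-1\\1&0\end{pmatrix}$, $X_2=\begin{pmatrix}0&i\\i&0\end{pmatrix}$, a basis of $\mathfrak{su}(2)$ with $[X_0,X_1]=-2X_2$, $[X_0,X_2]=2X_1$, $[X_1,X_2]=-2X_0$. For $\varepsilon,\lambda_1,\lambda_2>0$ let $g$ be the left-invariant metric on $\mathsf{SU}(2)$ with $X_0,X_1,X_2$ pairwise orthogonal and $g(X_0,X_0)=\varepsilon$, $g(X_1,X_1)=\lambda_1$, $g(X_2,X_2)=\lambda_2$; identify the orthonormal basis $X_0/\sqrt\varepsilon,X_1/\sqrt{\lambda_1},X_2/\sqrt{\lambda_2}$ with the standard basis $(e_0,e_1,e_2)$ of $\mathbb R^3$, and let $\mu$ be the corresponding bracket on $\mathbb R^3$. With curvature convention $\mathrm{Rm}(X\wedge Y)=\nabla_{[X,Y]}-[\nabla_X,\nabla_Y]$, $\mathrm{Rm}^k(\mu):\bigotimes^k\mathbb R^3\otimes\Lambda^2\mathbb R^3\to\mathfrak{so}(3)$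 is the $k$-th covariant derivative of the curvature operator of $g$ at $e$ expressed in this basis, and $|\cdot|_{\rm st}$ is the standard Euclidean norm. An almost-Berger sequence is a sequence $(\mu^{(n)})$ of such brackets, with parameters $(\varepsilon^{(n)},\lambda_1^{(n)},\lambda_2^{(n)})$, such that $\varepsilon^{(n)}\to0$, $\lambda_i^{(n)}\to1$, and $|\lambda_1^{(n)}-\lambda_2^{(n)}|\le C\varepsilon^{(n)}$ for some $C>0$ and all $n$. Its regularity index is $\mathrm{reg}(\mu^{(n)})=\sup\{k\in\mathbb Z:(\varepsilon^{(n)})^{-k/2}|\lambda_1^{(n)}-\lambda_2^{(n)}|\to0\}\in\{1,2,\dots\}\cup\{+\infty\}$. *)

theory Defs
  imports "HOL-Analysis.Analysis"
begin

text \<open>Indices 0,1,2 stand for the basis elements X0,X1,X2 of su(2), resp. for the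
orthonormal basis e0,e1,e2 of R^3.  Structure constants of su(2) in the basis X0,X1,X2:
[X_i,X_j] = sum_l suc i j l X_l, from [X0,X1]=-2X2, [X0,X2]=2X1, [X1,X2]=-2X0.\<close>

definition su2_const :: "nat \<Rightarrow> nat \<Rightarrow> nat \<Rightarrow> real" where
  "su2_const i j l =
     (if (i,j,l) = (0,1,2) then -2 else if (i,j,l) = (1,0,2) then 2
      else if (i,j,l) = (0,2,1) then 2 else if (i,j,l) = (2,0,1) then -2
      else if (i,j,l) = (1,2,0) then -2 else if (i,j,l) = (2,1,0) then 2
      else 0)"

text \<open>Squared lengths g(X_i,X_i).\<close>
definition metric_diag :: "real \<Rightarrow> real \<Rightarrow> real \<Rightarrow> nat \<Rightarrow> real" where
  "metric_diag eps l1 l2 i = (if i = 0 then eps else if i = 1 then l1 else l2)"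

text \<open>The bracket mu on R^3 obtained by identifying X_i / sqrt(g_i) with e_i:
mu(e_i,e_j) = sum_l (mu_const i j l) e_l.\<close>
definition mu_const :: "real \<Rightarrow> real \<Rightarrow> real \<Rightarrow> nat \<Rightarrow> nat \<Rightarrow> nat \<Rightarrow> real" where
  "mu_const eps l1 l2 i j l =
     su2_const i j l * sqrt (metric_diag eps l1 l2 l)
       / (sqrt (metric_diag eps l1 l2 i) * sqrt (metric_diag eps l1 l2 j))"

text \<open>Levi-Civita connection of the metric Lie algebra (R^3, c, standard inner product)
(Koszul formula for left-invariant fields): LC c w a p = < nabla_{e_w} e_a , e_p >.\<close>
definition LC :: "(nat \<Rightarrow> nat \<Rightarrow> nat \<Rightarrow> real) \<Rightarrow> nat \<Rightarrow> nat \<Rightarrow> nat \<Rightarrow> real" where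
  "LC c w a p = (c w a p - c a p w + c p w a) / 2"

text \<open>Matrix of the endomorphism nabla_{e_w}: entry (m,l) = < nabla_{e_w} e_l , e_m >.\<close>
definition nablaM :: "(nat \<Rightarrow> nat \<Rightarrow> nat \<Rightarrow> real) \<Rightarrow> nat \<Rightarrow> nat \<Rightarrow> nat \<Rightarrow> real" where
  "nablaM c w m l = LC c w l m"

text \<open>Curvature operator Rm(e_i \<and> e_j) = nabla_{[e_i,e_j]} - [nabla_{e_i}, nabla_{e_j}],
as a matrix: entry (m,l) = < Rm(e_i \<and> e_j) e_l , e_m >.\<close>
definition Rm0 :: "(nat \<Rightarrow> nat \<Rightarrow> nat \<Rightarrow> real) \<Rightarrow> nat \<Rightarrow> nat \<Rightarrow> nat \<Rightarrow> nat \<Rightarrow> real" where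
  "Rm0 c i j m l =
     (\<Sum>p<3. c i j p * nablaM c p m l)
     - (\<Sum>q<3. nablaM c i m q * nablaM c j q l - nablaM c j m q * nablaM c i q l)"

text \<open>A left-invariant tensor of type (tensor^k R^3) (x) Lambda^2 R^3 -> so(3) is given by
its components T ws i j m l = < T(e_ws ; e_i \<and> e_j) e_l , e_m >, ws a list of k indices.\<close>
fun cov_der :: "(nat \<Rightarrow> nat \<Rightarrow> nat \<Rightarrow> real)
     \<Rightarrow> (nat list \<Rightarrow> nat \<Rightarrow> nat \<Rightarrow> nat \<Rightarrow> nat \<Rightarrow> real)
     \<Rightarrow> (nat list \<Rightarrow> nat \<Rightarrow> nat \<Rightarrow> nat \<Rightarrow> nat \<Rightarrow> real)" where
  "cov_der c T [] i j m l = 0"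
| "cov_der c T (w # vs) i j m l =
     (\<Sum>q<3. nablaM c w m q * T vs i j q l - T vs i j m q * nablaM c w q l)
     - (\<Sum>a<length vs. \<Sum>p<3. LC c w (vs ! a) p * T (vs[a := p]) i j m l)
     - (\<Sum>p<3. LC c w i p * T vs p j m l + LC c w j p * T vs i p m l)"

definition RmK :: "(nat \<Rightarrow> nat \<Rightarrow> nat \<Rightarrow> real) \<Rightarrow> nat
     \<Rightarrow> nat list \<Rightarrow> nat \<Rightarrow> nat \<Rightarrow> nat \<Rightarrow> nat \<Rightarrow> real" where
  "RmK c k = (cov_der c ^^ k) (\<lambda>ws. Rm0 c)"

definition RmK_norm :: "(nat \<Rightarrow> nat \<Rightarrow> nat \<Rightarrow> real) \<Rightarrow> nat \<Rightarrow> real" where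
  "RmK_norm c k = sqrt (\<Sum>ws\<in>{ws. length ws = k \<and> set ws \<subseteq> {..<3}}.
      \<Sum>i<3. \<Sum>j<3. \<Sum>m<3. \<Sum>l<3. (RmK c k ws i j m l)\<^sup>2)"

definition almost_Berger :: "(nat \<Rightarrow> real) \<Rightarrow> (nat \<Rightarrow> real) \<Rightarrow> (nat \<Rightarrow> real) \<Rightarrow> bool" where
  "almost_Berger eps l1 l2 \<longleftrightarrow>
     (\<forall>n. eps n > 0 \<and> l1 n > 0 \<and> l2 n > 0) \<and>
     eps \<longlonglongrightarrow> 0 \<and> l1 \<longlonglongrightarrow> 1 \<and> l2 \<longlonglongrightarrow> 1 \<and>
     (\<exists>C>0. \<forall>n. \<bar>l1 n - l2 n\<bar> \<le> C * eps n)"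

definition reg_index :: "(nat \<Rightarrow> real) \<Rightarrow> (nat \<Rightarrow> real) \<Rightarrow> (nat \<Rightarrow> real) \<Rightarrow> ereal" where
  "reg_index eps l1 l2 = Sup {ereal (real_of_int k) | k.
      (\<lambda>n. eps n powr (- real_of_int k / 2) * \<bar>l1 n - l2 n\<bar>) \<longlonglongrightarrow> 0}"

end

theory Submission
  imports Defs
begin

text \<open>Write the bracket as [e1,e2] = x e0, [e2,e0] = y e1, [e0,e1] = z e2; then x is of order
sqrt eps and y, z are of order 1/sqrt eps. On components of left-invariant tensors, covariant
differentiation in direction e_w is minus the derivation extension of the skew matrix
nabla_{e_w} to all slots.

For y = z (a Berger metric) nabla_{e0} is a multiple of the rotation J of the e1e2-plane, and J
is a derivation of the connection; by induction J annihilates every nabla^k Rm, hence so does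
nabla_{e0}. Only nabla_{e1} and nabla_{e2}, which are of order sqrt eps, contribute, so
nabla^k Rm = O(eps^(k/2)).

Replacing z by y changes the connection by O(|z - y|); induction on k bounds the resulting
change of nabla^k Rm by O(|z - y| eps^(-(k+1)/2)), and |z - y| = O(|lambda1 - lambda2| / sqrt eps).\<close>

section \<open>Derivations of tensors\<close>

text \<open>Tensors on \<open>\<real>\<^sup>3\<close> are modelled as functions on index lists; \<open>tensor_act A\<close> is the
extension of the endomorphism A to a derivation acting on every slot.\<close>

definition tensor_act :: "(nat \<Rightarrow> nat \<Rightarrow> real) \<Rightarrow> (nat list \<Rightarrow> real) \<Rightarrow> nat list \<Rightarrow> real" where
  "tensor_act A F xs = (\<Sum>a<length xs. \<Sum>p<3. A p (xs!a) * F (xs[a:=p]))"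

lemma tensor_act_Cons:
  "tensor_act A F (w#xs) = (\<Sum>p<3. A p w * F (p#xs)) + tensor_act A (\<lambda>ys. F (w#ys)) xs"
  unfolding tensor_act_def length_Cons sum.lessThan_Suc_shift by simp

lemma tensor_act_append4:
  "tensor_act A F (vs @ [i,j,m,l]) = (\<Sum>a<length vs. \<Sum>p<3. A p (vs!a) * F (vs[a:=p] @ [i,j,m,l]))
    + (\<Sum>p<3. A p i * F (vs @ [p,j,m,l])) + (\<Sum>p<3. A p j * F (vs @ [i,p,m,l]))
    + (\<Sum>p<3. A p m * F (vs @ [i,j,p,l])) + (\<Sum>p<3. A p l * F (vs @ [i,j,m,p]))"
proof -
  have "length (vs @ [i,j,m,l]) = Suc (Suc (Suc (Suc (length vs))))" by simp
  then show ?thesis unfolding tensor_act_def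
    by (simp only: sum.lessThan_Suc) (simp add: nth_append list_update_append)
qed

lemma tensor_act_cong:
  "(\<And>a p. a < length xs \<Longrightarrow> p < 3 \<Longrightarrow> F (xs[a:=p]) = G (xs[a:=p]))
    \<Longrightarrow> tensor_act A F xs = tensor_act A G xs"
  unfolding tensor_act_def by (intro sum.cong refl) auto

lemma tensor_act_eq_0I:
  "(\<And>a p. a < length xs \<Longrightarrow> p < 3 \<Longrightarrow> F (xs[a:=p]) = 0) \<Longrightarrow> tensor_act A F xs = 0"
  unfolding tensor_act_def by (intro sum.neutral ballI) auto

lemma tensor_act_zero_matrix:
  "(\<And>q r. q < 3 \<Longrightarrow> r < 3 \<Longrightarrow> M q r = 0) \<Longrightarrow> set xs \<subseteq> {..<3} \<Longrightarrow> tensor_act M F xs = 0"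
  unfolding tensor_act_def by (intro sum.neutral ballI) (auto simp: subset_iff)

lemma tensor_act_uminus: "tensor_act A (\<lambda>ys. - F ys) xs = - tensor_act A F xs"
  unfolding tensor_act_def by (simp add: sum_negf)

lemma tensor_act_cmult: "tensor_act (\<lambda>q r. c * A q r) F xs = c * tensor_act A F xs"
  unfolding tensor_act_def by (simp add: sum_distrib_left mult.assoc)

lemma tensor_act_add:
  "tensor_act A F xs + tensor_act B F xs = tensor_act (\<lambda>q r. A q r + B q r) F xs"
  unfolding tensor_act_def by (simp add: sum.distrib[symmetric] distrib_right)

lemma tensor_act_diff:
  "tensor_act A F xs - tensor_act A' G xs
     = tensor_act A (\<lambda>ys. F ys - G ys) xs + tensor_act (\<lambda>q r. A q r - A' q r) G xs"
  unfolding tensor_act_def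
  by (simp add: sum.distrib[symmetric] sum_subtractf[symmetric] algebra_simps)

lemma tensor_act_sum:
  "(\<Sum>p\<in>P. c p * tensor_act (A p) F xs) = tensor_act (\<lambda>q r. \<Sum>p\<in>P. c p * A p q r) F xs"
proof -
  have "(\<Sum>p\<in>P. c p * tensor_act (A p) F xs)
      = (\<Sum>p\<in>P. \<Sum>a<length xs. \<Sum>q<3. c p * A p q (xs!a) * F (xs[a:=q]))"
    unfolding tensor_act_def by (simp add: sum_distrib_left mult.assoc)
  also have "\<dots> = (\<Sum>a<length xs. \<Sum>p\<in>P. \<Sum>q<3. c p * A p q (xs!a) * F (xs[a:=q]))"
    by (rule sum.swap)
  also have "\<dots> = (\<Sum>a<length xs. \<Sum>q<3. \<Sum>p\<in>P. c p * A p q (xs!a) * F (xs[a:=q]))"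
    by (rule sum.cong[OF refl], rule sum.swap)
  also have "\<dots> = tensor_act (\<lambda>q r. \<Sum>p\<in>P. c p * A p q r) F xs"
    unfolding tensor_act_def by (simp add: sum_distrib_right)
  finally show ?thesis .
qed

lemma tensor_act_abs_le:
  assumes "\<And>q r. \<bar>A q r\<bar> \<le> a"
    and "\<And>b p. b < length xs \<Longrightarrow> p < 3 \<Longrightarrow> \<bar>F (xs[b:=p])\<bar> \<le> f"
  shows "\<bar>tensor_act A F xs\<bar> \<le> real (length xs) * 3 * (a * f)"
proof -
  have a0: "0 \<le> a" using assms(1)[of 0 0] by linarith
  have "\<bar>tensor_act A F xs\<bar> \<le> (\<Sum>b<length xs. \<bar>\<Sum>p<3. A p (xs!b) * F (xs[b:=p])\<bar>)"
    unfolding tensor_act_def by (rule sum_abs)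
  also have "\<dots> \<le> (\<Sum>b<length xs. \<Sum>p<3::nat. \<bar>A p (xs!b) * F (xs[b:=p])\<bar>)"
    by (intro sum_mono sum_abs)
  also have "\<dots> \<le> (\<Sum>b<length xs. \<Sum>p<3::nat. a * f)"
    by (intro sum_mono) (auto simp: abs_mult a0 intro!: mult_mono assms)
  finally show ?thesis by simp
qed

lemma sum_sum_split_diagonal:
  fixes f :: "nat \<Rightarrow> real" and g :: "nat \<Rightarrow> nat \<Rightarrow> real"
  shows "(\<Sum>b<n. \<Sum>a<n. if a = b then f b else g b a)
       = (\<Sum>b<n. f b) + (\<Sum>b<n. \<Sum>a<n. if a = b then 0 else g b a)"
proof -
  have "(\<Sum>a<n. if a = b then f b else g b a) = f b + (\<Sum>a<n. if a = b then 0 else g b a)"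
    if "b < n" for b
  proof -
    have "(\<Sum>a<n. if a = b then f b else g b a)
        = (\<Sum>a<n. if a = b then f b else 0) + (\<Sum>a<n. if a = b then 0 else g b a)"
      by (simp only: sum.distrib[symmetric]) (rule sum.cong; simp)
    then show ?thesis using that by (simp add: sum.delta)
  qed
  then show ?thesis by (simp add: sum.distrib)
qed

lemma tensor_act_tensor_act:
  "tensor_act B (tensor_act A F) xs = (\<Sum>b<length xs. \<Sum>a<length xs. if a = b then
       (\<Sum>p<3. (\<Sum>r<3. A p r * B r (xs!b)) * F (xs[b:=p]))
     else (\<Sum>r<3. \<Sum>p<3. B r (xs!b) * A p (xs!a) * F ((xs[b:=r])[a:=p])))"
proof -
  have "tensor_act B (tensor_act A F) xs = (\<Sum>b<length xs. \<Sum>r<3. \<Sum>a<length xs. \<Sum>p<3.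
      B r (xs!b) * A p (xs[b:=r]!a) * F ((xs[b:=r])[a:=p]))"
    by (simp add: tensor_act_def sum_distrib_left mult.assoc)
  also have "\<dots> = (\<Sum>b<length xs. \<Sum>a<length xs. \<Sum>r<3. \<Sum>p<3.
      B r (xs!b) * A p (xs[b:=r]!a) * F ((xs[b:=r])[a:=p]))"
    by (rule sum.cong[OF refl], rule sum.swap)
  also have "\<dots> = (\<Sum>b<length xs. \<Sum>a<length xs. if a = b
      then (\<Sum>p<3. (\<Sum>r<3. A p r * B r (xs!b)) * F (xs[b:=p]))
      else (\<Sum>r<3. \<Sum>p<3. B r (xs!b) * A p (xs!a) * F ((xs[b:=r])[a:=p])))"
  proof (intro sum.cong refl)
    fix b a assume b: "b \<in> {..<length xs}"
    show "(\<Sum>r<3. \<Sum>p<3. B r (xs!b) * A p (xs[b:=r]!a) * F ((xs[b:=r])[a:=p]))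
      = (if a = b then (\<Sum>p<3. (\<Sum>r<3. A p r * B r (xs!b)) * F (xs[b:=p]))
         else (\<Sum>r<3. \<Sum>p<3. B r (xs!b) * A p (xs!a) * F ((xs[b:=r])[a:=p])))"
    proof (cases "a = b")
      case True
      have "(\<Sum>r<3. \<Sum>p<3. B r (xs!b) * A p (xs[b:=r]!a) * F ((xs[b:=r])[a:=p]))
          = (\<Sum>r<3::nat. \<Sum>p<3::nat. A p r * B r (xs!b) * F (xs[b:=p]))"
        using b True by (intro sum.cong refl) (simp add: mult_ac)
      also have "\<dots> = (\<Sum>p<3::nat. \<Sum>r<3::nat. A p r * B r (xs!b) * F (xs[b:=p]))"
        by (rule sum.swap)
      finally show ?thesis using True by (simp add: sum_distrib_right)
    qed simp
  qed
  finally show ?thesis .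
qed

text \<open>The commutator of two derivations is the derivation of the matrix commutator
\<open>AB - BA\<close>: the mixed terms acting on two different slots cancel.\<close>

lemma tensor_act_commute:
  "tensor_act B (tensor_act A F) xs = tensor_act A (tensor_act B F) xs
     + tensor_act (\<lambda>p q. (\<Sum>r<3. A p r * B r q) - (\<Sum>r<3. B p r * A r q)) F xs"
proof -
  define n where "n = length xs"
  define O1 where "O1 b a = (\<Sum>r<3::nat. \<Sum>p<3::nat. B r (xs!b) * A p (xs!a) * F ((xs[b:=r])[a:=p]))" for b a
  define O2 where "O2 b a = (\<Sum>r<3::nat. \<Sum>p<3::nat. A r (xs!b) * B p (xs!a) * F ((xs[b:=r])[a:=p]))" for b a
  define D1 where "D1 b = (\<Sum>p<3::nat. (\<Sum>r<3. A p r * B r (xs!b)) * F (xs[b:=p]))" for b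
  define D2 where "D2 b = (\<Sum>p<3::nat. (\<Sum>r<3. B p r * A r (xs!b)) * F (xs[b:=p]))" for b
  have BA: "tensor_act B (tensor_act A F) xs
      = (\<Sum>b<n. D1 b) + (\<Sum>b<n. \<Sum>a<n. if a = b then 0 else O1 b a)"
    unfolding tensor_act_tensor_act n_def D1_def O1_def by (rule sum_sum_split_diagonal)
  have AB: "tensor_act A (tensor_act B F) xs
      = (\<Sum>b<n. D2 b) + (\<Sum>b<n. \<Sum>a<n. if a = b then 0 else O2 b a)"
    unfolding tensor_act_tensor_act n_def D2_def O2_def by (rule sum_sum_split_diagonal)
  have comm: "tensor_act (\<lambda>p q. (\<Sum>r<3. A p r * B r q) - (\<Sum>r<3. B p r * A r q)) F xs
      = (\<Sum>b<n. D1 b) - (\<Sum>b<n. D2 b)"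
    unfolding tensor_act_def n_def D1_def D2_def by (simp add: sum_subtractf left_diff_distrib)
  have swap: "O1 a b = O2 b a" if "a \<noteq> b" for a b
  proof -
    have "O1 a b = (\<Sum>p<3::nat. \<Sum>r<3::nat. B r (xs!a) * A p (xs!b) * F ((xs[a:=r])[b:=p]))"
      unfolding O1_def by (rule sum.swap)
    also have "\<dots> = O2 b a"
      unfolding O2_def using that by (intro sum.cong refl) (simp add: list_update_swap mult_ac)
    finally show ?thesis .
  qed
  have "(\<Sum>b<n. \<Sum>a<n. if a = b then 0 else O2 b a) = (\<Sum>a<n. \<Sum>b<n. if a = b then 0 else O2 b a)"
    by (rule sum.swap)
  also have "\<dots> = (\<Sum>a<n. \<Sum>b<n. if b = a then 0 else O1 a b)"
    by (intro sum.cong refl) (auto simp: swap)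
  finally show ?thesis using BA AB comm by simp
qed

section \<open>Covariant derivatives as derivations\<close>

text \<open>Components of \<open>\<nabla>\<^sup>kRm\<close> are read off a single index list: the k derivative slots first, then the
four indices i, j, m, l of \<open>\<langle>Rm(e\<^sub>i \<and> e\<^sub>j) e\<^sub>l, e\<^sub>m\<rangle>\<close>.\<close>

definition flat_tensor :: "(nat list \<Rightarrow> nat \<Rightarrow> nat \<Rightarrow> nat \<Rightarrow> nat \<Rightarrow> real) \<Rightarrow> nat list \<Rightarrow> real" where
  "flat_tensor T xs = T (take (length xs - 4) xs)
     (xs!(length xs - 4)) (xs!(length xs - 3)) (xs!(length xs - 2)) (xs!(length xs - 1))"

lemma flat_tensor_append: "flat_tensor T (vs @ [i,j,m,l]) = T vs i j m l"
  by (simp add: flat_tensor_def nth_append)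

lemma length_4_obtain:
  assumes "length xs = 4"
  obtains i j m l where "xs = [i,j,m,l]"
  using assms that by (auto simp: numeral_eq_Suc length_Suc_conv)

lemma append_last4_obtain:
  assumes "4 \<le> length xs"
  obtains vs i j m l where "xs = vs @ [i,j,m,l]"
proof -
  have "length (drop (length xs - 4) xs) = 4" using assms by simp
  then obtain i j m l where "drop (length xs - 4) xs = [i,j,m,l]"
    by (rule length_4_obtain)
  then have "xs = take (length xs - 4) xs @ [i,j,m,l]"
    by (metis append_take_drop_id)
  then show ?thesis by (rule that)
qed

lemma LC_antisym:
  assumes "\<And>a b l. c a b l = - c b a l"
  shows "LC c w a p = - LC c w p a"
  using assms[of w p a] assms[of p a w] assms[of a w p] unfolding LC_def by (simp add: field_simps)

lemma cov_der_eq_tensor_act: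
  assumes antisym: "\<And>a b l. c a b l = - c b a l"
  shows "cov_der c T (w#vs) i j m l = - tensor_act (nablaM c w) (flat_tensor T) (vs @ [i,j,m,l])"
proof -
  define N where "N = nablaM c w"
  have N_antisym: "N p q = - N q p" for p q
    unfolding N_def nablaM_def by (rule LC_antisym[OF antisym])
  have commutator: "(\<Sum>q<3. N m q * T vs i j q l - T vs i j m q * N q l)
      = - (\<Sum>p<3. N p m * T vs i j p l) - (\<Sum>p<3. N p l * T vs i j m p)"
  proof -
    have "(\<Sum>q<3. N m q * T vs i j q l) = - (\<Sum>p<3. N p m * T vs i j p l)"
      by (subst N_antisym) (simp add: sum_negf)
    then show ?thesis by (simp add: sum_subtractf mult.commute)
  qed
  have "cov_der c T (w#vs) i j m l = (\<Sum>q<3. N m q * T vs i j q l - T vs i j m q * N q l)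
     - (\<Sum>a<length vs. \<Sum>p<3. N p (vs!a) * T (vs[a:=p]) i j m l)
     - ((\<Sum>p<3. N p i * T vs p j m l) + (\<Sum>p<3. N p j * T vs i p m l))"
    by (simp add: N_def nablaM_def sum.distrib)
  also have "\<dots> = - tensor_act N (flat_tensor T) (vs @ [i,j,m,l])"
    unfolding commutator tensor_act_append4 flat_tensor_append by simp
  finally show ?thesis unfolding N_def .
qed

definition RmK_flat :: "(nat \<Rightarrow> nat \<Rightarrow> nat \<Rightarrow> real) \<Rightarrow> nat \<Rightarrow> nat list \<Rightarrow> real" where
  "RmK_flat c k = flat_tensor (RmK c k)"

lemma RmK_flat_0: "RmK_flat c 0 [i,j,m,l] = Rm0 c i j m l"
  using flat_tensor_append[where vs="[]"] by (simp add: RmK_flat_def RmK_def)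

lemma RmK_flat_Suc:
  assumes "\<And>a b l. c a b l = - c b a l" and "4 \<le> length xs"
  shows "RmK_flat c (Suc k) (w#xs) = - tensor_act (nablaM c w) (RmK_flat c k) xs"
proof -
  obtain vs i j m l where xs: "xs = vs @ [i,j,m,l]"
    using append_last4_obtain[OF assms(2)] .
  have "RmK_flat c (Suc k) (w#xs) = cov_der c (RmK c k) (w#vs) i j m l"
    using flat_tensor_append[of _ "w#vs"] by (simp add: RmK_flat_def RmK_def xs)
  also have "\<dots> = - tensor_act (nablaM c w) (RmK_flat c k) xs"
    using cov_der_eq_tensor_act[OF assms(1)] by (simp add: RmK_flat_def xs)
  finally show ?thesis .
qed

lemma RmK_norm_le:
  assumes "\<And>xs. length xs = k + 4 \<Longrightarrow> set xs \<subseteq> {..<3} \<Longrightarrow> \<bar>RmK_flat c k xs\<bar> \<le> M"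
  shows "RmK_norm c k \<le> sqrt (real (card {ws::nat list. length ws = k \<and> set ws \<subseteq> {..<3}}) * 81) * M"
proof -
  define W where "W = {ws::nat list. length ws = k \<and> set ws \<subseteq> {..<3}}"
  have M0: "0 \<le> M" using assms[of "replicate (k+4) 0"] by auto
  have sq: "(RmK c k ws i j m l)\<^sup>2 \<le> M\<^sup>2"
    if "ws \<in> W" "i < 3" "j < 3" "m < 3" "l < 3" for ws i j m l
  proof -
    have "\<bar>RmK_flat c k (ws @ [i,j,m,l])\<bar> \<le> M" using that unfolding W_def by (intro assms) auto
    then have "\<bar>RmK c k ws i j m l\<bar> \<le> M" by (simp add: RmK_flat_def flat_tensor_append)
    then show ?thesis using abs_le_square_iff M0 by fastforce
  qed
  have "(\<Sum>ws\<in>W. \<Sum>i<3. \<Sum>j<3. \<Sum>m<3. \<Sum>l<3. (RmK c k ws i j m l)\<^sup>2)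
      \<le> (\<Sum>ws\<in>W. \<Sum>i<3::nat. \<Sum>j<3::nat. \<Sum>m<3::nat. \<Sum>l<3::nat. M\<^sup>2)"
    by (intro sum_mono sq) auto
  also have "\<dots> = real (card W) * 81 * M\<^sup>2" by simp
  finally have "RmK_norm c k \<le> sqrt (real (card W) * 81 * M\<^sup>2)"
    unfolding RmK_norm_def W_def[symmetric] by (rule real_sqrt_le_mono)
  also have "\<dots> = sqrt (real (card W) * 81) * M" using M0 by (simp add: real_sqrt_mult)
  finally show ?thesis unfolding W_def .
qed

section \<open>Diagonal brackets\<close>

definition diag_bracket :: "real \<Rightarrow> real \<Rightarrow> real \<Rightarrow> nat \<Rightarrow> nat \<Rightarrow> nat \<Rightarrow> real" where
  "diag_bracket x y z i j l =
     (if (i,j,l) = (1,2,0) then x else if (i,j,l) = (2,1,0) then -x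
      else if (i,j,l) = (2,0,1) then y else if (i,j,l) = (0,2,1) then -y
      else if (i,j,l) = (0,1,2) then z else if (i,j,l) = (1,0,2) then -z else 0)"

lemma mu_const_eq_diag_bracket:
  "mu_const e l1 l2 = diag_bracket (-2 * sqrt e / (sqrt l1 * sqrt l2))
     (-2 * sqrt l1 / (sqrt e * sqrt l2)) (-2 * sqrt l2 / (sqrt e * sqrt l1))"
  by (simp add: fun_eq_iff mu_const_def su2_const_def metric_diag_def diag_bracket_def mult.commute)

lemma diag_bracket_antisym: "diag_bracket x y z a b l = - diag_bracket x y z b a l"
  by (simp add: diag_bracket_def)

lemma diag_bracket_linear:
  "diag_bracket x y z a b l
     = x * diag_bracket 1 0 0 a b l + y * diag_bracket 0 1 0 a b l + z * diag_bracket 0 0 1 a b l"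
  by (simp add: diag_bracket_def)

lemma LC_diag_bracket:
  "LC (diag_bracket x y z) w a p =
     (if (w,a,p) = (0,1,2) then (y+z-x)/2 else if (w,a,p) = (0,2,1) then (x-y-z)/2
      else if (w,a,p) = (1,0,2) then (y-z-x)/2 else if (w,a,p) = (1,2,0) then (x-y+z)/2
      else if (w,a,p) = (2,0,1) then (x+y-z)/2 else if (w,a,p) = (2,1,0) then (z-y-x)/2 else 0)"
  unfolding LC_def diag_bracket_def by auto

lemma LC_diag_bracket_linear:
  "LC (diag_bracket x y z) w a p = x * LC (diag_bracket 1 0 0) w a p
     + y * LC (diag_bracket 0 1 0) w a p + z * LC (diag_bracket 0 0 1) w a p"
  unfolding LC_def diag_bracket_linear[of x y z]
  by (simp add: algebra_simps add_divide_distrib diff_divide_distrib)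

lemma abs_mult_le_of_abs_le: "\<bar>c\<bar> \<le> d \<Longrightarrow> \<bar>x * c\<bar> \<le> \<bar>x\<bar> * (d::real)"
  by (simp add: abs_mult mult_left_mono)

lemma diag_bracket_abs_le: "\<bar>diag_bracket x y z a b l\<bar> \<le> \<bar>x\<bar> + \<bar>y\<bar> + \<bar>z\<bar>"
proof -
  have "\<bar>x * diag_bracket 1 0 0 a b l\<bar> \<le> \<bar>x\<bar> * 1" "\<bar>y * diag_bracket 0 1 0 a b l\<bar> \<le> \<bar>y\<bar> * 1"
    "\<bar>z * diag_bracket 0 0 1 a b l\<bar> \<le> \<bar>z\<bar> * 1"
    by (intro abs_mult_le_of_abs_le; simp add: diag_bracket_def)+
  then show ?thesis unfolding diag_bracket_linear[of x y z] by linarith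
qed

lemma diag_bracket_diff_abs_le:
  "\<bar>diag_bracket x y z a b l - diag_bracket x y y a b l\<bar> \<le> \<bar>z - y\<bar>"
proof -
  have "diag_bracket x y z a b l - diag_bracket x y y a b l = (z - y) * diag_bracket 0 0 1 a b l"
    by (simp add: diag_bracket_def)
  moreover have "\<bar>(z - y) * diag_bracket 0 0 1 a b l\<bar> \<le> \<bar>z - y\<bar> * 1"
    by (intro abs_mult_le_of_abs_le) (simp add: diag_bracket_def)
  ultimately show ?thesis by simp
qed

lemma nablaM_diag_bracket_abs_le: "\<bar>nablaM (diag_bracket x y z) w m l\<bar> \<le> \<bar>x\<bar> + \<bar>y\<bar> + \<bar>z\<bar>"
proof -
  have "\<bar>x * LC (diag_bracket 1 0 0) w l m\<bar> \<le> \<bar>x\<bar> * (1/2)"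
    "\<bar>y * LC (diag_bracket 0 1 0) w l m\<bar> \<le> \<bar>y\<bar> * (1/2)"
    "\<bar>z * LC (diag_bracket 0 0 1) w l m\<bar> \<le> \<bar>z\<bar> * (1/2)"
    by (intro abs_mult_le_of_abs_le; simp add: LC_diag_bracket)+
  then show ?thesis unfolding nablaM_def LC_diag_bracket_linear[of x y z] by linarith
qed

text \<open>Off the collapsing direction e0, the large structure constants y and z enter the
connection only through their difference.\<close>

lemma nablaM_diag_bracket_abs_le_transversal:
  assumes "w \<noteq> 0"
  shows "\<bar>nablaM (diag_bracket x y z) w m l\<bar> \<le> \<bar>x\<bar> + \<bar>z - y\<bar>"
proof -
  have eq: "nablaM (diag_bracket x y z) w m l
      = x * LC (diag_bracket 1 0 0) w l m + (z - y) * LC (diag_bracket 0 0 1) w l m"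
    using assms unfolding nablaM_def LC_diag_bracket_linear[of x y z]
    by (simp add: LC_diag_bracket algebra_simps)
  have "\<bar>x * LC (diag_bracket 1 0 0) w l m\<bar> \<le> \<bar>x\<bar> * (1/2)"
    "\<bar>(z - y) * LC (diag_bracket 0 0 1) w l m\<bar> \<le> \<bar>z - y\<bar> * (1/2)"
    by (intro abs_mult_le_of_abs_le; simp add: LC_diag_bracket)+
  then show ?thesis unfolding eq
    using abs_triangle_ineq[of "x * LC (diag_bracket 1 0 0) w l m" "(z - y) * LC (diag_bracket 0 0 1) w l m"]
      abs_ge_zero[of x] abs_ge_zero[of "z - y"]
    by linarith
qed

lemma nablaM_diag_bracket_diff_abs_le:
  "\<bar>nablaM (diag_bracket x y z) w m l - nablaM (diag_bracket x y y) w m l\<bar> \<le> \<bar>z - y\<bar>"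
proof -
  have "nablaM (diag_bracket x y z) w m l - nablaM (diag_bracket x y y) w m l
      = (z - y) * LC (diag_bracket 0 0 1) w l m"
    unfolding nablaM_def LC_diag_bracket_linear[of x y z] LC_diag_bracket_linear[of x y y]
    by (simp add: algebra_simps)
  moreover have "\<bar>(z - y) * LC (diag_bracket 0 0 1) w l m\<bar> \<le> \<bar>z - y\<bar> * (1/2)"
    by (intro abs_mult_le_of_abs_le) (simp add: LC_diag_bracket)
  ultimately show ?thesis by simp
qed

section \<open>Berger metrics\<close>

definition berger_curvature :: "real \<Rightarrow> real \<Rightarrow> nat \<Rightarrow> nat \<Rightarrow> nat \<Rightarrow> nat \<Rightarrow> real" where
  "berger_curvature x y i j m l = (if i = 0 \<or> j = 0 then - (x*x)/4 else 3*(x*x)/4 - x*y) *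
     ((if i = m \<and> j = l then 1 else 0) - (if i = l \<and> j = m then 1 else 0))"

lemma less_3_cases: "(i::nat) < 3 \<Longrightarrow> i = 0 \<or> i = 1 \<or> i = 2"
  by auto

lemma Rm0_berger:
  assumes "i < 3" "j < 3" "m < 3" "l < 3"
  shows "Rm0 (diag_bracket x y y) i j m l = berger_curvature x y i j m l"
  using less_3_cases[OF assms(1)] less_3_cases[OF assms(2)] less_3_cases[OF assms(3)]
    less_3_cases[OF assms(4)]
  by (elim disjE; simp add: Rm0_def nablaM_def LC_diag_bracket numeral_3_eq_3 diag_bracket_def
      berger_curvature_def field_simps)

lemma berger_curvature_abs_le: "\<bar>berger_curvature x y i j m l\<bar> \<le> x*x + \<bar>x\<bar> * \<bar>y\<bar>"
proof -
  define \<kappa> where "\<kappa> = (if i = 0 \<or> j = 0 then - (x*x)/4 else 3*(x*x)/4 - x*y)"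
  define \<delta> where "\<delta> = (if i = m \<and> j = l then 1 else 0) - (if i = l \<and> j = m then 1 else (0::real))"
  have "\<bar>(if P then 1 else 0) - (if Q then 1 else 0)\<bar> \<le> (1::real)" for P Q
    by (cases P; cases Q) simp_all
  then have "\<bar>\<delta>\<bar> \<le> 1" unfolding \<delta>_def .
  moreover have "\<bar>\<kappa>\<bar> \<le> x*x + \<bar>x\<bar> * \<bar>y\<bar>"
  proof (cases "i = 0 \<or> j = 0")
    case True
    have "\<bar>- (x*x)/4\<bar> = (x*x)/4" by simp
    then show ?thesis using True by (simp add: \<kappa>_def)
  next
    case False
    have "\<bar>3*(x*x)/4 - x*y\<bar> \<le> \<bar>3*(x*x)/4\<bar> + \<bar>x*y\<bar>" by (rule abs_triangle_ineq4)
    moreover have "\<bar>3*(x*x)/4\<bar> = 3*(x*x)/4" "\<bar>x*y\<bar> = \<bar>x\<bar> * \<bar>y\<bar>" by (simp_all add: abs_mult)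
    moreover have "\<kappa> = 3*(x*x)/4 - x*y" using False by (simp add: \<kappa>_def)
    ultimately show ?thesis using zero_le_square[of x] by linarith
  qed
  ultimately have "\<bar>\<kappa>\<bar> * \<bar>\<delta>\<bar> \<le> (x*x + \<bar>x\<bar> * \<bar>y\<bar>) * 1"
    by (intro mult_mono) auto
  then show ?thesis unfolding berger_curvature_def \<kappa>_def[symmetric] \<delta>_def[symmetric]
    by (simp add: abs_mult)
qed

definition J12 :: "nat \<Rightarrow> nat \<Rightarrow> real" where
  "J12 m l = (if m = 2 \<and> l = 1 then 1 else if m = 1 \<and> l = 2 then -1 else 0)"

lemma nablaM_diag_bracket_0: "nablaM (diag_bracket x y z) 0 m l = ((y + z - x)/2) * J12 m l"
  by (simp add: nablaM_def LC_diag_bracket J12_def)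

text \<open>For y = z the rotation J12 is a derivation of the Levi-Civita connection:
\<open>\<nabla>\<^bsub>J e\<^sub>w\<^esub> = [J, \<nabla>\<^sub>w]\<close>.\<close>

lemma J12_derivation_nablaM_berger:
  assumes "w < 3" "q < 3" "r < 3"
  shows "(\<Sum>p<3. J12 p w * nablaM (diag_bracket x y y) p q r)
    + ((\<Sum>s<3. nablaM (diag_bracket x y y) w q s * J12 s r)
       - (\<Sum>s<3. J12 q s * nablaM (diag_bracket x y y) w s r)) = 0"
  using assms
  by (simp add: numeral_3_eq_3 less_Suc_eq nablaM_def LC_diag_bracket J12_def field_simps)

lemma tensor_act_J12_Rm0_berger:
  assumes "i < 3" "j < 3" "m < 3" "l < 3"
  shows "tensor_act J12 (RmK_flat (diag_bracket x y y) 0) [i,j,m,l] = 0"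
proof -
  have "tensor_act J12 (RmK_flat (diag_bracket x y y) 0) [i,j,m,l]
      = (\<Sum>p<3. J12 p i * RmK_flat (diag_bracket x y y) 0 [p,j,m,l])
      + (\<Sum>p<3. J12 p j * RmK_flat (diag_bracket x y y) 0 [i,p,m,l])
      + (\<Sum>p<3. J12 p m * RmK_flat (diag_bracket x y y) 0 [i,j,p,l])
      + (\<Sum>p<3. J12 p l * RmK_flat (diag_bracket x y y) 0 [i,j,m,p])"
    using tensor_act_append4[where vs="[]"] by simp
  also have "\<dots> = 0"
    using less_3_cases[OF assms(1)] less_3_cases[OF assms(2)] less_3_cases[OF assms(3)]
      less_3_cases[OF assms(4)]
    by (elim disjE) (simp_all add: RmK_flat_0 numeral_3_eq_3 J12_def Rm0_berger berger_curvature_def)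
  finally show ?thesis .
qed

lemma tensor_act_J12_RmK_berger:
  "length xs = k + 4 \<Longrightarrow> set xs \<subseteq> {..<3} \<Longrightarrow> tensor_act J12 (RmK_flat (diag_bracket x y y) k) xs = 0"
proof (induction k arbitrary: xs)
  case 0
  then obtain i j m l where xs: "xs = [i,j,m,l]" by (auto elim: length_4_obtain)
  then show ?case using 0 tensor_act_J12_Rm0_berger by simp
next
  case (Suc k)
  then obtain w xs' where xs: "xs = w # xs'" by (cases xs) auto
  with Suc.prems have w: "w < 3" and len: "length xs' = k + 4" and set: "set xs' \<subseteq> {..<3}"
    by auto
  define G where "G = RmK_flat (diag_bracket x y y) k"
  define N where "N = nablaM (diag_bracket x y y)"
  have RmK_Suc: "RmK_flat (diag_bracket x y y) (Suc k) (p#ys) = - tensor_act (N p) G ys"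
    if "length ys = k + 4" for p ys
    unfolding N_def G_def using that by (intro RmK_flat_Suc diag_bracket_antisym) simp
  have "tensor_act J12 (RmK_flat (diag_bracket x y y) (Suc k)) (w#xs')
      = (\<Sum>p<3. J12 p w * RmK_flat (diag_bracket x y y) (Suc k) (p#xs'))
        + tensor_act J12 (\<lambda>ys. RmK_flat (diag_bracket x y y) (Suc k) (w#ys)) xs'"
    by (rule tensor_act_Cons)
  also have "(\<Sum>p<3. J12 p w * RmK_flat (diag_bracket x y y) (Suc k) (p#xs'))
      = - tensor_act (\<lambda>q r. \<Sum>p<3. J12 p w * N p q r) G xs'"
    by (simp add: RmK_Suc len sum_negf tensor_act_sum)
  also have "tensor_act J12 (\<lambda>ys. RmK_flat (diag_bracket x y y) (Suc k) (w#ys)) xs'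
      = - tensor_act J12 (tensor_act (N w) G) xs'"
    by (subst tensor_act_uminus[symmetric], rule tensor_act_cong) (simp add: RmK_Suc len)
  also have "tensor_act J12 (tensor_act (N w) G) xs' = tensor_act (N w) (tensor_act J12 G) xs'
      + tensor_act (\<lambda>p q. (\<Sum>r<3. N w p r * J12 r q) - (\<Sum>r<3. J12 p r * N w r q)) G xs'"
    by (rule tensor_act_commute)
  also have "tensor_act (N w) (tensor_act J12 G) xs' = 0"
  proof (rule tensor_act_eq_0I)
    fix a p :: nat assume "a < length xs'" "p < 3"
    then show "tensor_act J12 G (xs'[a:=p]) = 0"
      unfolding G_def using len set set_update_subset_insert[of xs' a p] by (intro Suc.IH) auto
  qed
  finally have "tensor_act J12 (RmK_flat (diag_bracket x y y) (Suc k)) xs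
      = - tensor_act (\<lambda>q r. (\<Sum>p<3. J12 p w * N p q r)
          + ((\<Sum>s<3. N w q s * J12 s r) - (\<Sum>s<3. J12 q s * N w s r))) G xs'"
    by (simp add: xs tensor_act_add[symmetric])
  also have "\<dots> = 0"
    using tensor_act_zero_matrix[OF _ set] J12_derivation_nablaM_berger w by (simp add: N_def)
  finally show ?case .
qed

section \<open>Uniform estimates along a collapse\<close>

text \<open>The scale s stands for \<open>\<surd>\<epsilon>\<close> and t for \<open>1/\<surd>\<epsilon>\<close>.\<close>

definition collapse_bounds :: "real \<Rightarrow> real \<Rightarrow> real \<Rightarrow> real \<Rightarrow> real \<Rightarrow> real \<Rightarrow> real \<Rightarrow> bool" where
  "collapse_bounds K S x y z s t \<longleftrightarrow>
     0 < s \<and> s * t = 1 \<and> s \<le> S \<and> \<bar>x\<bar> \<le> K * s \<and> \<bar>y\<bar> \<le> K * t \<and> \<bar>z\<bar> \<le> K * t"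

lemma collapse_boundsD:
  assumes "collapse_bounds K S x y z s t"
  shows "0 < s" "0 < t" "0 \<le> K" "\<bar>x\<bar> \<le> K * s" "\<bar>y\<bar> \<le> K * t" "\<bar>z\<bar> \<le> K * t"
    and "s \<le> S" "s \<le> S\<^sup>2 * t" "s^k \<le> S^(2*k+2) * t^(k+2)"
proof -
  have s: "0 < s" "s * t = 1" "s \<le> S" "\<bar>x\<bar> \<le> K * s"
    using assms unfolding collapse_bounds_def by auto
  then show t: "0 < t" using zero_less_mult_pos[of s t] by simp
  show "0 < s" "\<bar>x\<bar> \<le> K * s" "s \<le> S" by (fact s)+
  show "\<bar>y\<bar> \<le> K * t" "\<bar>z\<bar> \<le> K * t" using assms unfolding collapse_bounds_def by auto
  have "0 \<le> K * s" using s(4) abs_ge_zero[of x] by linarith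
  then show "0 \<le> K" using s(1) by (simp add: zero_le_mult_iff)
  have "s = (s * s) * t" using s by (simp add: algebra_simps)
  also have "\<dots> \<le> (S * S) * t" using s t by (intro mult_right_mono mult_mono) auto
  finally show "s \<le> S\<^sup>2 * t" by (simp add: power2_eq_square)
  have "s^k = s^k * (s * t)^(k+2)" using s by simp
  also have "\<dots> = s^(2*k+2) * t^(k+2)" by (simp add: power_mult_distrib power_add mult_2)
  also have "\<dots> \<le> S^(2*k+2) * t^(k+2)" using s t by (intro mult_right_mono power_mono) auto
  finally show "s^k \<le> S^(2*k+2) * t^(k+2)" .
qed

lemma Rm0_berger_collapse_bound:
  assumes col: "collapse_bounds K S x y z s t" and "i < 3" "j < 3" "m < 3" "l < 3"
  shows "\<bar>Rm0 (diag_bracket x y y) i j m l\<bar> \<le> K * K * S\<^sup>2 + K * K"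
proof -
  note b = collapse_boundsD[OF col]
  have "\<bar>Rm0 (diag_bracket x y y) i j m l\<bar> \<le> x*x + \<bar>x\<bar> * \<bar>y\<bar>"
    using assms berger_curvature_abs_le by (simp add: Rm0_berger)
  also have "x*x \<le> (K * S) * (K * S)"
  proof -
    have "\<bar>x\<bar> \<le> K * S" using b(4) mult_left_mono[OF b(7) b(3)] by linarith
    then have "\<bar>x\<bar> * \<bar>x\<bar> \<le> (K * S) * (K * S)" by (intro mult_mono) auto
    then show ?thesis by (simp add: abs_mult[symmetric])
  qed
  also have "\<bar>x\<bar> * \<bar>y\<bar> \<le> (K * s) * (K * t)" using b by (intro mult_mono) auto
  also have "(K * s) * (K * t) = K * K"
    using col by (simp add: collapse_bounds_def algebra_simps)
  finally show ?thesis by (simp add: power2_eq_square algebra_simps)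
qed

text \<open>Each covariant derivative of the Berger curvature gains a factor s: the direction e0
contributes nothing by J-invariance.\<close>

lemma RmK_flat_berger_bound:
  assumes K0: "0 \<le> K"
  shows "\<exists>C\<ge>0. \<forall>x y z s t xs. collapse_bounds K S x y z s t \<longrightarrow> length xs = k + 4 \<longrightarrow>
      set xs \<subseteq> {..<3} \<longrightarrow> \<bar>RmK_flat (diag_bracket x y y) k xs\<bar> \<le> C * s^k"
proof (induction k)
  case 0
  show ?case
  proof (intro exI[of _ "K * K * S\<^sup>2 + K * K"] conjI allI impI)
    show "0 \<le> K * K * S\<^sup>2 + K * K" by simp
    fix x y z s t and xs :: "nat list"
    assume col: "collapse_bounds K S x y z s t" and len: "length xs = 0 + 4" and set: "set xs \<subseteq> {..<3}"
    obtain i j m l where xs: "xs = [i,j,m,l]" using len by (auto elim: length_4_obtain)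
    then show "\<bar>RmK_flat (diag_bracket x y y) 0 xs\<bar> \<le> (K * K * S\<^sup>2 + K * K) * s^0"
      using Rm0_berger_collapse_bound[OF col] set by (simp add: RmK_flat_0)
  qed
next
  case (Suc k)
  then obtain C where C0: "0 \<le> C" and IH: "\<And>x y z s t xs. collapse_bounds K S x y z s t \<Longrightarrow>
      length xs = k + 4 \<Longrightarrow> set xs \<subseteq> {..<3} \<Longrightarrow> \<bar>RmK_flat (diag_bracket x y y) k xs\<bar> \<le> C * s^k"
    by blast
  show ?case
  proof (intro exI[of _ "3 * (real k + 4) * K * C"] conjI allI impI)
    show "0 \<le> 3 * (real k + 4) * K * C" using C0 K0 by simp
    fix x y z s t and xs :: "nat list"
    assume col: "collapse_bounds K S x y z s t" and len: "length xs = Suc k + 4"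
      and set: "set xs \<subseteq> {..<3}"
    note b = collapse_boundsD[OF col]
    obtain w xs' where xs: "xs = w # xs'" using len by (cases xs) auto
    with len set have len': "length xs' = k + 4" and set': "set xs' \<subseteq> {..<3}" by auto
    have eq: "RmK_flat (diag_bracket x y y) (Suc k) xs
        = - tensor_act (nablaM (diag_bracket x y y) w) (RmK_flat (diag_bracket x y y) k) xs'"
      unfolding xs using len' by (intro RmK_flat_Suc diag_bracket_antisym) simp
    show "\<bar>RmK_flat (diag_bracket x y y) (Suc k) xs\<bar> \<le> 3 * (real k + 4) * K * C * s ^ Suc k"
    proof (cases "w = 0")
      case True
      have "nablaM (diag_bracket x y y) w = (\<lambda>q r. ((y + y - x) / 2) * J12 q r)"
        using True by (simp add: fun_eq_iff nablaM_diag_bracket_0)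
      then have "tensor_act (nablaM (diag_bracket x y y) w) (RmK_flat (diag_bracket x y y) k) xs'
          = ((y + y - x) / 2) * tensor_act J12 (RmK_flat (diag_bracket x y y) k) xs'"
        by (simp only: tensor_act_cmult)
      then show ?thesis
        using eq tensor_act_J12_RmK_berger[OF len' set'] b C0 by simp
    next
      case False
      have "\<bar>tensor_act (nablaM (diag_bracket x y y) w) (RmK_flat (diag_bracket x y y) k) xs'\<bar>
          \<le> real (length xs') * 3 * ((K * s) * (C * s^k))"
      proof (rule tensor_act_abs_le)
        fix q r show "\<bar>nablaM (diag_bracket x y y) w q r\<bar> \<le> K * s"
          using nablaM_diag_bracket_abs_le_transversal[OF False, of x y y q r] b by simp
      next
        fix a p :: nat assume "a < length xs'" "p < 3"
        then show "\<bar>RmK_flat (diag_bracket x y y) k (xs'[a:=p])\<bar> \<le> C * s^k"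
          using set' len' set_update_subset_insert[of xs' a p] by (intro IH[OF col]) auto
      qed
      then show ?thesis using eq len' by (simp add: algebra_simps)
    qed
  qed
qed

lemma abs_mult_diff_le:
  fixes a b a' b' B E :: real
  assumes "\<bar>b\<bar> \<le> B" "\<bar>a'\<bar> \<le> B" "\<bar>a - a'\<bar> \<le> E" "\<bar>b - b'\<bar> \<le> E"
  shows "\<bar>a * b - a' * b'\<bar> \<le> 2 * B * E"
proof -
  have "a * b - a' * b' = (a - a') * b + a' * (b - b')" by (simp add: algebra_simps)
  then have "\<bar>a * b - a' * b'\<bar> \<le> \<bar>a - a'\<bar> * \<bar>b\<bar> + \<bar>a'\<bar> * \<bar>b - b'\<bar>"
    by (simp add: abs_mult[symmetric] abs_triangle_ineq)
  also have "\<dots> \<le> E * B + B * E"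
    using assms by (intro add_mono mult_mono) auto
  finally show ?thesis by simp
qed

lemma Rm0_diff_abs_le:
  assumes "\<And>a b l. \<bar>c a b l\<bar> \<le> B" "\<And>a b l. \<bar>c' a b l\<bar> \<le> B"
    and "\<And>a b l. \<bar>c a b l - c' a b l\<bar> \<le> E"
    and "\<And>w m l. \<bar>nablaM c w m l\<bar> \<le> B" "\<And>w m l. \<bar>nablaM c' w m l\<bar> \<le> B"
    and "\<And>w m l. \<bar>nablaM c w m l - nablaM c' w m l\<bar> \<le> E"
  shows "\<bar>Rm0 c i j m l - Rm0 c' i j m l\<bar> \<le> 18 * B * E"
proof -
  define N where "N = nablaM c"
  define N' where "N' = nablaM c'"
  have bracket_term: "\<bar>(\<Sum>p<3. c i j p * N p m l) - (\<Sum>p<3. c' i j p * N' p m l)\<bar> \<le> 6 * B * E"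
  proof -
    have "\<bar>(\<Sum>p<3. c i j p * N p m l) - (\<Sum>p<3. c' i j p * N' p m l)\<bar>
        \<le> (\<Sum>p<3. \<bar>c i j p * N p m l - c' i j p * N' p m l\<bar>)"
      by (simp only: sum_subtractf[symmetric] sum_abs)
    also have "\<dots> \<le> (\<Sum>p<3::nat. 2 * B * E)"
      by (intro sum_mono abs_mult_diff_le) (simp_all add: N_def N'_def assms)
    finally show ?thesis by simp
  qed
  have commutator_term: "\<bar>(\<Sum>q<3. N i m q * N j q l - N j m q * N i q l)
      - (\<Sum>q<3. N' i m q * N' j q l - N' j m q * N' i q l)\<bar> \<le> 12 * B * E"
  proof -
    have "\<bar>(\<Sum>q<3. N i m q * N j q l - N j m q * N i q l)
        - (\<Sum>q<3. N' i m q * N' j q l - N' j m q * N' i q l)\<bar>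
        = \<bar>\<Sum>q<3. (N i m q * N j q l - N' i m q * N' j q l)
            - (N j m q * N i q l - N' j m q * N' i q l)\<bar>"
      by (simp add: sum_subtractf[symmetric] algebra_simps)
    also have "\<dots> \<le> (\<Sum>q<3. \<bar>(N i m q * N j q l - N' i m q * N' j q l)
            - (N j m q * N i q l - N' j m q * N' i q l)\<bar>)"
      by (rule sum_abs)
    also have "\<dots> \<le> (\<Sum>q<3::nat. 4 * B * E)"
    proof (intro sum_mono)
      fix q
      have "\<bar>N i m q * N j q l - N' i m q * N' j q l\<bar> \<le> 2 * B * E"
        "\<bar>N j m q * N i q l - N' j m q * N' i q l\<bar> \<le> 2 * B * E"
        by (intro abs_mult_diff_le; simp add: N_def N'_def assms)+
      then show "\<bar>(N i m q * N j q l - N' i m q * N' j q l)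
          - (N j m q * N i q l - N' j m q * N' i q l)\<bar> \<le> 4 * B * E"
        by linarith
    qed
    finally show ?thesis by simp
  qed
  have "Rm0 c i j m l - Rm0 c' i j m l
      = ((\<Sum>p<3. c i j p * N p m l) - (\<Sum>p<3. c' i j p * N' p m l))
      - ((\<Sum>q<3. N i m q * N j q l - N j m q * N i q l)
         - (\<Sum>q<3. N' i m q * N' j q l - N' j m q * N' i q l))"
    unfolding Rm0_def N_def N'_def by simp
  then show ?thesis using bracket_term commutator_term by linarith
qed

lemma Rm0_diag_bracket_diff_collapse_bound:
  assumes col: "collapse_bounds K S x y z s t"
  shows "\<bar>Rm0 (diag_bracket x y z) i j m l - Rm0 (diag_bracket x y y) i j m l\<bar>
    \<le> 18 * (K * S\<^sup>2 + 4 * K) * \<bar>z - y\<bar> * t"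
proof -
  note b = collapse_boundsD[OF col]
  define B where "B = \<bar>x\<bar> + 2 * \<bar>y\<bar> + 2 * \<bar>z\<bar>"
  have "\<bar>Rm0 (diag_bracket x y z) i j m l - Rm0 (diag_bracket x y y) i j m l\<bar> \<le> 18 * B * \<bar>z - y\<bar>"
  proof (rule Rm0_diff_abs_le)
    fix a b l
    show "\<bar>diag_bracket x y z a b l\<bar> \<le> B"
      using diag_bracket_abs_le[of x y z a b l] unfolding B_def by linarith
    show "\<bar>diag_bracket x y y a b l\<bar> \<le> B"
      using diag_bracket_abs_le[of x y y a b l] abs_ge_zero[of z] unfolding B_def by linarith
    show "\<bar>diag_bracket x y z a b l - diag_bracket x y y a b l\<bar> \<le> \<bar>z - y\<bar>"
      by (rule diag_bracket_diff_abs_le)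
  next
    fix w m l
    show "\<bar>nablaM (diag_bracket x y z) w m l\<bar> \<le> B"
      using nablaM_diag_bracket_abs_le[of x y z w m l] unfolding B_def by linarith
    show "\<bar>nablaM (diag_bracket x y y) w m l\<bar> \<le> B"
      using nablaM_diag_bracket_abs_le[of x y y w m l] abs_ge_zero[of z] unfolding B_def by linarith
    show "\<bar>nablaM (diag_bracket x y z) w m l - nablaM (diag_bracket x y y) w m l\<bar> \<le> \<bar>z - y\<bar>"
      by (rule nablaM_diag_bracket_diff_abs_le)
  qed
  also have "\<dots> \<le> 18 * ((K * S\<^sup>2 + 4 * K) * t) * \<bar>z - y\<bar>"
  proof -
    have "K * s \<le> K * (S\<^sup>2 * t)" using b(8) b(3) by (rule mult_left_mono)
    then have "B \<le> (K * S\<^sup>2 + 4 * K) * t" unfolding B_def using b by (simp add: algebra_simps)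
    then show ?thesis by (intro mult_right_mono) auto
  qed
  finally show ?thesis by (simp add: algebra_simps)
qed

text \<open>Replacing z by y perturbs each covariant derivative by an extra factor t: the
connection is of size t, and the unperturbed derivatives are bounded as in the Berger case.\<close>

lemma RmK_flat_diag_bracket_diff_Suc:
  assumes col: "collapse_bounds K S x y z s t"
    and len: "length xs = k + 4" and set: "set xs \<subseteq> {..<3}" and C0: "0 \<le> C"
    and berger: "\<And>ys. length ys = k + 4 \<Longrightarrow> set ys \<subseteq> {..<3} \<Longrightarrow>
      \<bar>RmK_flat (diag_bracket x y y) k ys\<bar> \<le> C * s^k"
    and diff: "\<And>ys. length ys = k + 4 \<Longrightarrow> set ys \<subseteq> {..<3} \<Longrightarrow>
      \<bar>RmK_flat (diag_bracket x y z) k ys - RmK_flat (diag_bracket x y y) k ys\<bar> \<le> D * \<bar>z - y\<bar> * t^(k+1)"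
  shows "\<bar>RmK_flat (diag_bracket x y z) (Suc k) (w#xs) - RmK_flat (diag_bracket x y y) (Suc k) (w#xs)\<bar>
    \<le> 3 * (real k + 4) * ((K * S\<^sup>2 + 2 * K) * D + C * S^(2*k+2)) * \<bar>z - y\<bar> * t^(k+2)"
proof -
  note b = collapse_boundsD[OF col]
  define F where "F = RmK_flat (diag_bracket x y z) k"
  define G where "G = RmK_flat (diag_bracket x y y) k"
  define N where "N = nablaM (diag_bracket x y z) w"
  define N' where "N' = nablaM (diag_bracket x y y) w"
  define E where "E = \<bar>z - y\<bar>"
  have on_updates: "length (xs[a:=p]) = k + 4" "set (xs[a:=p]) \<subseteq> {..<3}" if "p < 3" for a p :: nat
    using len set set_update_subset_insert[of xs a p] that by auto
  have "RmK_flat (diag_bracket x y z) (Suc k) (w#xs) - RmK_flat (diag_bracket x y y) (Suc k) (w#xs)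
      = - (tensor_act N F xs - tensor_act N' G xs)"
    unfolding F_def G_def N_def N'_def using len by (simp add: RmK_flat_Suc[OF diag_bracket_antisym])
  then have split: "\<bar>RmK_flat (diag_bracket x y z) (Suc k) (w#xs) - RmK_flat (diag_bracket x y y) (Suc k) (w#xs)\<bar>
      \<le> \<bar>tensor_act N (\<lambda>ys. F ys - G ys) xs\<bar> + \<bar>tensor_act (\<lambda>q r. N q r - N' q r) G xs\<bar>"
    unfolding tensor_act_diff by (simp add: abs_triangle_ineq)
  have perturbed: "\<bar>tensor_act N (\<lambda>ys. F ys - G ys) xs\<bar>
      \<le> real (length xs) * 3 * (((K * S\<^sup>2 + 2 * K) * t) * (D * E * t^(k+1)))"
  proof (rule tensor_act_abs_le)
    fix q r
    have "K * s \<le> K * (S\<^sup>2 * t)" using b(8) b(3) by (rule mult_left_mono)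
    then show "\<bar>N q r\<bar> \<le> (K * S\<^sup>2 + 2 * K) * t"
      using nablaM_diag_bracket_abs_le[of x y z w q r] b unfolding N_def by (simp add: algebra_simps)
  next
    fix a p :: nat assume "p < 3"
    then show "\<bar>F (xs[a:=p]) - G (xs[a:=p])\<bar> \<le> D * E * t^(k+1)"
      unfolding F_def G_def E_def by (intro diff on_updates)
  qed
  have connection_change: "\<bar>tensor_act (\<lambda>q r. N q r - N' q r) G xs\<bar>
      \<le> real (length xs) * 3 * (E * (C * (S^(2*k+2) * t^(k+2))))"
  proof (rule tensor_act_abs_le)
    fix q r show "\<bar>N q r - N' q r\<bar> \<le> E"
      unfolding N_def N'_def E_def by (rule nablaM_diag_bracket_diff_abs_le)
  next
    fix a p :: nat assume "p < 3"
    then have "\<bar>G (xs[a:=p])\<bar> \<le> C * s^k" unfolding G_def by (intro berger on_updates)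
    also have "\<dots> \<le> C * (S^(2*k+2) * t^(k+2))" using b(9) C0 by (rule mult_left_mono)
    finally show "\<bar>G (xs[a:=p])\<bar> \<le> C * (S^(2*k+2) * t^(k+2))" .
  qed
  have "real (length xs) * 3 * (((K * S\<^sup>2 + 2 * K) * t) * (D * E * t^(k+1)))
      + real (length xs) * 3 * (E * (C * (S^(2*k+2) * t^(k+2))))
      = 3 * (real k + 4) * ((K * S\<^sup>2 + 2 * K) * D + C * S^(2*k+2)) * \<bar>z - y\<bar> * t^(k+2)"
    unfolding E_def using len by (simp add: algebra_simps)
  then show ?thesis using split perturbed connection_change by linarith
qed

lemma RmK_flat_diag_bracket_diff_bound:
  assumes K0: "0 \<le> K" and S0: "0 \<le> S"
  shows "\<exists>D\<ge>0. \<forall>x y z s t xs. collapse_bounds K S x y z s t \<longrightarrow> length xs = k + 4 \<longrightarrow>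
      set xs \<subseteq> {..<3} \<longrightarrow>
      \<bar>RmK_flat (diag_bracket x y z) k xs - RmK_flat (diag_bracket x y y) k xs\<bar> \<le> D * \<bar>z - y\<bar> * t^(k+1)"
proof (induction k)
  case 0
  show ?case
  proof (intro exI[of _ "18 * (K * S\<^sup>2 + 4 * K)"] conjI allI impI)
    show "0 \<le> 18 * (K * S\<^sup>2 + 4 * K)" using K0 by simp
    fix x y z s t and xs :: "nat list"
    assume col: "collapse_bounds K S x y z s t" and len: "length xs = 0 + 4"
    obtain i j m l where "xs = [i,j,m,l]" using len by (auto elim: length_4_obtain)
    then show "\<bar>RmK_flat (diag_bracket x y z) 0 xs - RmK_flat (diag_bracket x y y) 0 xs\<bar>
        \<le> 18 * (K * S\<^sup>2 + 4 * K) * \<bar>z - y\<bar> * t^(0+1)"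
      using Rm0_diag_bracket_diff_collapse_bound[OF col] by (simp add: RmK_flat_0)
  qed
next
  case (Suc k)
  then obtain D where D0: "0 \<le> D" and diff: "\<And>x y z s t xs. collapse_bounds K S x y z s t \<Longrightarrow>
      length xs = k + 4 \<Longrightarrow> set xs \<subseteq> {..<3} \<Longrightarrow>
      \<bar>RmK_flat (diag_bracket x y z) k xs - RmK_flat (diag_bracket x y y) k xs\<bar> \<le> D * \<bar>z - y\<bar> * t^(k+1)"
    by blast
  obtain C where C0: "0 \<le> C" and berger: "\<And>x y z s t xs. collapse_bounds K S x y z s t \<Longrightarrow>
      length xs = k + 4 \<Longrightarrow> set xs \<subseteq> {..<3} \<Longrightarrow> \<bar>RmK_flat (diag_bracket x y y) k xs\<bar> \<le> C * s^k"
    using RmK_flat_berger_bound[OF K0, of S k] by blast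
  show ?case
  proof (intro exI[of _ "3 * (real k + 4) * ((K * S\<^sup>2 + 2 * K) * D + C * S^(2*k+2))"] conjI allI impI)
    show "0 \<le> 3 * (real k + 4) * ((K * S\<^sup>2 + 2 * K) * D + C * S^(2*k+2))"
      using K0 D0 C0 S0 by simp
    fix x y z s t and xs :: "nat list"
    assume col: "collapse_bounds K S x y z s t" and len: "length xs = Suc k + 4"
      and set: "set xs \<subseteq> {..<3}"
    obtain w xs' where xs: "xs = w # xs'" using len by (cases xs) auto
    with len set have "length xs' = k + 4" "set xs' \<subseteq> {..<3}" by auto
    from RmK_flat_diag_bracket_diff_Suc[OF col this C0 berger[OF col] diff[OF col]]
    show "\<bar>RmK_flat (diag_bracket x y z) (Suc k) xs - RmK_flat (diag_bracket x y y) (Suc k) xs\<bar>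
        \<le> 3 * (real k + 4) * ((K * S\<^sup>2 + 2 * K) * D + C * S^(2*k+2)) * \<bar>z - y\<bar> * t^(Suc k + 1)"
      by (simp add: xs)
  qed
qed

lemma RmK_flat_collapse_bound:
  assumes K0: "0 \<le> K" and S0: "0 \<le> S" and k: "1 \<le> k"
  shows "\<exists>M\<ge>0. \<forall>x y z s t xs. collapse_bounds K S x y z s t \<longrightarrow> length xs = k + 4 \<longrightarrow>
      set xs \<subseteq> {..<3} \<longrightarrow> \<bar>RmK_flat (diag_bracket x y z) k xs\<bar> \<le> M * (s + \<bar>z - y\<bar> * t^(k+1))"
proof -
  obtain C where C0: "0 \<le> C" and berger: "\<And>x y z s t xs. collapse_bounds K S x y z s t \<Longrightarrow>
      length xs = k + 4 \<Longrightarrow> set xs \<subseteq> {..<3} \<Longrightarrow> \<bar>RmK_flat (diag_bracket x y y) k xs\<bar> \<le> C * s^k"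
    using RmK_flat_berger_bound[OF K0, of S k] by blast
  obtain D where D0: "0 \<le> D" and diff: "\<And>x y z s t xs. collapse_bounds K S x y z s t \<Longrightarrow>
      length xs = k + 4 \<Longrightarrow> set xs \<subseteq> {..<3} \<Longrightarrow>
      \<bar>RmK_flat (diag_bracket x y z) k xs - RmK_flat (diag_bracket x y y) k xs\<bar> \<le> D * \<bar>z - y\<bar> * t^(k+1)"
    using RmK_flat_diag_bracket_diff_bound[OF K0 S0, of k] by blast
  show ?thesis
  proof (intro exI[of _ "C * S^(k-1) + D"] conjI allI impI)
    show "0 \<le> C * S^(k-1) + D" using C0 D0 S0 by simp
    fix x y z s t and xs :: "nat list"
    assume col: "collapse_bounds K S x y z s t" and xs: "length xs = k + 4" "set xs \<subseteq> {..<3}"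
    note b = collapse_boundsD[OF col]
    have "s^k = s * s^(k-1)" using k by (metis Suc_diff_le diff_Suc_1 power_Suc)
    also have "\<dots> \<le> s * S^(k-1)" using b by (intro mult_left_mono power_mono) auto
    finally have "C * s^k \<le> C * S^(k-1) * s" using C0 by (simp add: mult_left_mono mult_ac)
    moreover have "0 \<le> C * S^(k-1) * (\<bar>z - y\<bar> * t^(k+1))" "0 \<le> D * s"
      using C0 D0 S0 b by simp_all
    moreover have "(C * S^(k-1) + D) * (s + \<bar>z - y\<bar> * t^(k+1))
        = C * S^(k-1) * s + C * S^(k-1) * (\<bar>z - y\<bar> * t^(k+1)) + D * s + D * \<bar>z - y\<bar> * t^(k+1)"
      by (simp add: algebra_simps)
    ultimately have "C * s^k + D * \<bar>z - y\<bar> * t^(k+1) \<le> (C * S^(k-1) + D) * (s + \<bar>z - y\<bar> * t^(k+1))"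
      by linarith
    then show "\<bar>RmK_flat (diag_bracket x y z) k xs\<bar> \<le> (C * S^(k-1) + D) * (s + \<bar>z - y\<bar> * t^(k+1))"
      using berger[OF col xs] diff[OF col xs] by linarith
  qed
qed

section \<open>Almost-Berger brackets\<close>

lemma LIMSEQ_pos_uniform_lower_bound:
  fixes X :: "nat \<Rightarrow> real"
  assumes "X \<longlonglongrightarrow> L" "0 < L" "\<And>n. 0 < X n"
  obtains a where "0 < a" "\<And>n. a \<le> X n"
proof -
  obtain N where N: "\<And>n. n \<ge> N \<Longrightarrow> L/2 < X n"
    using order_tendstoD(1)[OF assms(1), of "L/2"] assms(2) by (auto simp: eventually_sequentially)
  define a where "a = min (L/2) (Min (X ` {..N}))"
  have "0 < Min (X ` {..N})" using assms(3) by (subst Min_gr_iff) auto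
  then have "0 < a" using assms(2) unfolding a_def by simp
  moreover have "a \<le> X n" for n
  proof (cases "n \<le> N")
    case True
    then have "Min (X ` {..N}) \<le> X n" by (intro Min_le) auto
    then show ?thesis unfolding a_def by simp
  next
    case False
    then show ?thesis using N[of n] unfolding a_def by simp
  qed
  ultimately show ?thesis by (rule that)
qed

lemma LIMSEQ_uniform_upper_bound:
  fixes X :: "nat \<Rightarrow> real"
  assumes "X \<longlonglongrightarrow> L"
  obtains b where "\<And>n. X n \<le> b"
proof -
  have "Bseq X" using assms by (intro convergent_imp_Bseq convergentI)
  then obtain b where "\<And>n. norm (X n) \<le> b" by (auto simp: Bseq_def)
  then have "X n \<le> b" for n by (metis abs_le_D1 real_norm_def)
  then show ?thesis by (rule that)
qed

lemma almost_Berger_uniform_bounds: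
  assumes "almost_Berger eps l1 l2"
  obtains a b E where "0 < a" "\<And>n. 0 < eps n" "\<And>n. eps n \<le> E"
    "\<And>n. a \<le> l1 n" "\<And>n. l1 n \<le> b" "\<And>n. a \<le> l2 n" "\<And>n. l2 n \<le> b"
proof -
  have pos: "\<And>n. 0 < eps n" "\<And>n. 0 < l1 n" "\<And>n. 0 < l2 n"
    and lim: "eps \<longlonglongrightarrow> 0" "l1 \<longlonglongrightarrow> 1" "l2 \<longlonglongrightarrow> 1"
    using assms unfolding almost_Berger_def by auto
  obtain E where "\<And>n. eps n \<le> E" using LIMSEQ_uniform_upper_bound[OF lim(1)] by blast
  moreover obtain a1 a2 where "0 < a1" "\<And>n. a1 \<le> l1 n" "0 < a2" "\<And>n. a2 \<le> l2 n"
    using LIMSEQ_pos_uniform_lower_bound[OF lim(2) _ pos(2)]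
      LIMSEQ_pos_uniform_lower_bound[OF lim(3) _ pos(3)] by (metis zero_less_one)
  moreover obtain b1 b2 where "\<And>n. l1 n \<le> b1" "\<And>n. l2 n \<le> b2"
    using LIMSEQ_uniform_upper_bound[OF lim(2)] LIMSEQ_uniform_upper_bound[OF lim(3)] by metis
  ultimately show ?thesis
    by (intro that[of "min a1 a2" E "max b1 b2"] pos(1)) (simp_all add: min_le_iff_disj le_max_iff_disj)
qed

lemma mu_const_collapse_bounds:
  assumes "0 < a" "0 < e" "e \<le> E" "a \<le> p" "p \<le> b" "a \<le> q" "q \<le> b"
  obtains x y z where "mu_const e p q = diag_bracket x y z"
    and "collapse_bounds (2 / a + 2 * sqrt b / sqrt a) (sqrt E) x y z (sqrt e) (1 / sqrt e)"
    and "\<bar>z - y\<bar> \<le> 2 * \<bar>p - q\<bar> * (1 / sqrt e) / a"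
proof -
  define s t where "s = sqrt e" and "t = 1 / s"
  define x y z where "x = -2 * sqrt e / (sqrt p * sqrt q)" and "y = -2 * sqrt p / (sqrt e * sqrt q)"
    and "z = -2 * sqrt q / (sqrt e * sqrt p)"
  define K where "K = 2 / a + 2 * sqrt b / sqrt a"
  have p: "0 < p" and q: "0 < q" and b: "0 < b" using assms by linarith+
  have s: "0 < s" and t: "0 < t" unfolding s_def t_def using assms by simp_all
  have pq: "a \<le> sqrt p * sqrt q"
  proof -
    have "sqrt a * sqrt a \<le> sqrt p * sqrt q" using assms by (intro mult_mono) auto
    then show ?thesis using assms by simp
  qed
  have ratio: "sqrt p / sqrt q \<le> sqrt b / sqrt a" "sqrt q / sqrt p \<le> sqrt b / sqrt a"
    using assms p q by (auto intro!: frac_le)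
  have "\<bar>x\<bar> = 2 * s / (sqrt p * sqrt q)" unfolding x_def s_def using assms p q by (simp add: abs_divide abs_mult)
  also have "\<dots> \<le> 2 * s / a" using pq s assms by (intro divide_left_mono) auto
  also have "\<dots> \<le> K * s" unfolding K_def using s assms b by (simp add: field_simps)
  finally have x_le: "\<bar>x\<bar> \<le> K * s" .
  have "\<bar>y\<bar> = 2 * t * (sqrt p / sqrt q)" "\<bar>z\<bar> = 2 * t * (sqrt q / sqrt p)"
    unfolding y_def z_def t_def s_def using assms p q by (simp_all add: abs_divide abs_mult)
  moreover have "2 * t * (sqrt p / sqrt q) \<le> 2 * t * (sqrt b / sqrt a)"
    "2 * t * (sqrt q / sqrt p) \<le> 2 * t * (sqrt b / sqrt a)"
    using ratio t by (intro mult_left_mono; simp)+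
  moreover have "2 * t * (sqrt b / sqrt a) \<le> K * t" unfolding K_def using t assms
    by (simp add: algebra_simps)
  ultimately have yz_le: "\<bar>y\<bar> \<le> K * t" "\<bar>z\<bar> \<le> K * t" by linarith+
  have sqrt_sq: "sqrt p * (sqrt p * c) = p * c" "sqrt q * (sqrt q * c) = q * c" for c
    using p q by (simp_all add: mult.assoc[symmetric])
  have "z - y = 2 * (p - q) * t / (sqrt p * sqrt q)"
    unfolding z_def y_def t_def s_def using p q assms by (simp add: field_simps sqrt_sq)
  then have "\<bar>z - y\<bar> = 2 * \<bar>p - q\<bar> * t / (sqrt p * sqrt q)"
    by (simp only: abs_divide abs_mult) (simp add: p q t abs_of_pos)
  also have "\<dots> \<le> 2 * \<bar>p - q\<bar> * t / a" using pq assms t by (intro divide_left_mono) auto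
  finally have "\<bar>z - y\<bar> \<le> 2 * \<bar>p - q\<bar> * t / a" .
  moreover have "mu_const e p q = diag_bracket x y z"
    unfolding x_def y_def z_def by (rule mu_const_eq_diag_bracket)
  moreover have "collapse_bounds K (sqrt E) x y z s t"
    unfolding collapse_bounds_def using s x_le yz_le assms by (simp add: s_def t_def)
  ultimately show ?thesis using that unfolding K_def s_def t_def by blast
qed

lemma inverse_sqrt_power_eq_powr:
  assumes "0 < e"
  shows "(1 / sqrt e)^n = e powr (- real n / 2)"
proof -
  have "1 / sqrt e = e powr (- (1/2))"
    using assms by (simp add: powr_minus_divide powr_half_sqrt)
  then have "(1 / sqrt e)^n = e powr (real n * (- (1/2)))"
    using assms by (simp add: powr_power)
  then show ?thesis by simp
qed

lemma RmK_norm_mu_const_bound: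
  assumes "0 < a" "a \<le> b" "0 \<le> E" "1 \<le> k"
  obtains L where "0 < L" "\<And>e p q. 0 < e \<Longrightarrow> e \<le> E \<Longrightarrow> a \<le> p \<Longrightarrow> p \<le> b \<Longrightarrow> a \<le> q \<Longrightarrow> q \<le> b
      \<Longrightarrow> RmK_norm (mu_const e p q) k \<le> L * (sqrt e + e powr (- (real k + 2) / 2) * \<bar>p - q\<bar>)"
proof -
  define K where "K = 2 / a + 2 * sqrt b / sqrt a"
  have K0: "0 \<le> K" unfolding K_def using assms by simp
  obtain M where M0: "0 \<le> M" and M: "\<And>x y z s t xs. collapse_bounds K (sqrt E) x y z s t \<Longrightarrow>
      length xs = k + 4 \<Longrightarrow> set xs \<subseteq> {..<3} \<Longrightarrow>
      \<bar>RmK_flat (diag_bracket x y z) k xs\<bar> \<le> M * (s + \<bar>z - y\<bar> * t^(k+1))"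
    using RmK_flat_collapse_bound[OF K0 _ assms(4), of "sqrt E"] assms(3) by auto
  define W where "W = sqrt (real (card {ws::nat list. length ws = k \<and> set ws \<subseteq> {..<3}}) * 81)"
  define L where "L = W * M * (1 + 2 / a) + 1"
  show ?thesis
  proof (rule that)
    show "0 < L" unfolding L_def W_def using M0 assms by (simp add: add_nonneg_pos)
    fix e p q assume e: "0 < e" "e \<le> E" and pq: "a \<le> p" "p \<le> b" "a \<le> q" "q \<le> b"
    define t where "t = 1 / sqrt e"
    have t: "0 < t" unfolding t_def using e by simp
    obtain x y z where mu: "mu_const e p q = diag_bracket x y z"
      and col: "collapse_bounds K (sqrt E) x y z (sqrt e) t" and zy: "\<bar>z - y\<bar> \<le> 2 * \<bar>p - q\<bar> * t / a"
      using mu_const_collapse_bounds[OF assms(1) e pq] unfolding K_def t_def by blast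
    have "\<bar>z - y\<bar> * t^(k+1) \<le> (2 * \<bar>p - q\<bar> * t / a) * t^(k+1)"
      using zy t by (intro mult_right_mono) auto
    also have "\<dots> = (2 / a) * (t^(k+2) * \<bar>p - q\<bar>)" by (simp add: field_simps)
    moreover have "0 \<le> (2 / a) * sqrt e" "0 \<le> t^(k+2) * \<bar>p - q\<bar>" using assms e t by simp_all
    moreover have "(1 + 2 / a) * (sqrt e + t^(k+2) * \<bar>p - q\<bar>)
        = sqrt e + t^(k+2) * \<bar>p - q\<bar> + (2 / a) * sqrt e + (2 / a) * (t^(k+2) * \<bar>p - q\<bar>)"
      by (simp add: algebra_simps)
    ultimately have "sqrt e + \<bar>z - y\<bar> * t^(k+1) \<le> (1 + 2 / a) * (sqrt e + t^(k+2) * \<bar>p - q\<bar>)"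
      by linarith
    then have "M * (sqrt e + \<bar>z - y\<bar> * t^(k+1)) \<le> M * (1 + 2 / a) * (sqrt e + t^(k+2) * \<bar>p - q\<bar>)"
      using M0 by (simp add: mult_left_mono mult.assoc)
    then have "RmK_norm (mu_const e p q) k \<le> W * (M * (1 + 2 / a) * (sqrt e + t^(k+2) * \<bar>p - q\<bar>))"
      unfolding mu W_def by (intro RmK_norm_le order_trans[OF M[OF col]])
    also have "\<dots> \<le> L * (sqrt e + t^(k+2) * \<bar>p - q\<bar>)"
      unfolding L_def using e t by (simp add: algebra_simps)
    also have "t^(k+2) = e powr (- (real k + 2) / 2)"
      unfolding t_def inverse_sqrt_power_eq_powr[OF e(1)] by (rule arg_cong[where f="(powr) e"]) simp
    finally show "RmK_norm (mu_const e p q) k \<le> L * (sqrt e + e powr (- (real k + 2) / 2) * \<bar>p - q\<bar>)" .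
  qed
qed

theorem proposition4p4:
  fixes eps l1 l2 :: "nat \<Rightarrow> real"
  assumes "almost_Berger eps l1 l2"
    and "reg_index eps l1 l2 \<ge> 2"
  shows "\<forall>k::nat. k \<ge> 1 \<longrightarrow> (\<exists>L>0. \<forall>n.
           RmK_norm (mu_const (eps n) (l1 n) (l2 n)) k
             \<le> L * (sqrt (eps n) + eps n powr (- (real k + 2) / 2) * \<bar>l1 n - l2 n\<bar>))"
proof (intro allI impI)
  fix k :: nat assume k: "k \<ge> 1"
  obtain a E b where a: "0 < a" and eps: "\<And>n. 0 < eps n" "\<And>n. eps n \<le> E"
    and l: "\<And>n. a \<le> l1 n" "\<And>n. l1 n \<le> b" "\<And>n. a \<le> l2 n" "\<And>n. l2 n \<le> b"
    by (rule almost_Berger_uniform_bounds[OF assms(1)]) blast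
  have ab: "a \<le> b" using l(1)[of 0] l(2)[of 0] by linarith
  have E0: "0 \<le> E" using eps(1)[of 0] eps(2)[of 0] by linarith
  obtain L where "0 < L" and bound: "\<And>e p q. 0 < e \<Longrightarrow> e \<le> E \<Longrightarrow> a \<le> p \<Longrightarrow> p \<le> b
      \<Longrightarrow> a \<le> q \<Longrightarrow> q \<le> b
      \<Longrightarrow> RmK_norm (mu_const e p q) k \<le> L * (sqrt e + e powr (- (real k + 2) / 2) * \<bar>p - q\<bar>)"
    by (rule RmK_norm_mu_const_bound[OF a ab E0 k]) blast
  show "\<exists>L>0. \<forall>n. RmK_norm (mu_const (eps n) (l1 n) (l2 n)) k
      \<le> L * (sqrt (eps n) + eps n powr (- (real k + 2) / 2) * \<bar>l1 n - l2 n\<bar>)"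
  proof (intro exI[of _ L] conjI allI)
    fix n
    show "RmK_norm (mu_const (eps n) (l1 n) (l2 n)) k
        \<le> L * (sqrt (eps n) + eps n powr (- (real k + 2) / 2) * \<bar>l1 n - l2 n\<bar>)"
      by (rule bound[OF eps(1) eps(2) l(1) l(2) l(3) l(4)])
  qed fact
qed

end
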